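(* For a positive integer $m$, let $M_1(m)$ be the number of ordinary partitions of $m$ in which the largest part occurs exactly once and every other part size that occurs, occurs exactly twice. Let $M_2(m)$ be the number of partitions of $m$ with $n$ copies of $n$ in which, with parts in ascending lexicographic order, the weighted difference between each part and the preceding one is $0$, and the smallest part is of the form $j_j$. Then $M_1(m)=M_2(m)$.
   Context: $M=\{m_i: 1\le i\le m\}$; a partition with $n$ copies of $n$ is a finite multiset of elements of $M$ whose values (first entries) sum to the number partitioned. Lexicographic order: $m_i>n_j$ iff $m>n$, or $m=n$ and $i>j$. Weighted difference $((m_i-n_j))=m-n-i-j$. *)

theory Defs
  imports Main "HOL-Library.Multiset" "HOL-Library.Product_Lexorder"
begin

text \<open>A part m_i of a partition with n copies of n is the pair (m, i) with 1 \<le> i \<le> m.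
  The linear order on pairs from Product_Lexorder is exactly the paper's lexicographic order.\<close>

definition weighted_diff :: "nat \<times> nat \<Rightarrow> nat \<times> nat \<Rightarrow> int" where
  "weighted_diff p q = int (fst p) - int (fst q) - int (snd p) - int (snd q)"

definition ncopies_partition :: "nat \<Rightarrow> (nat \<times> nat) multiset \<Rightarrow> bool" where
  "ncopies_partition m P \<longleftrightarrow>
     (\<forall>p \<in># P. 1 \<le> snd p \<and> snd p \<le> fst p) \<and> sum_mset (image_mset fst P) = m"

definition M1 :: "nat \<Rightarrow> nat" where
  "M1 m = card {P :: nat multiset.
     (\<forall>x \<in># P. 0 < x) \<and> sum_mset P = m \<and> P \<noteq> {#} \<and>
     count P (Max_mset P) = 1 \<and>
     (\<forall>x \<in># P. x \<noteq> Max_mset P \<longrightarrow> count P x = 2)}"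

definition M2 :: "nat \<Rightarrow> nat" where
  "M2 m = card {P :: (nat \<times> nat) multiset.
     ncopies_partition m P \<and> P \<noteq> {#} \<and>
     (let xs = sorted_list_of_multiset P in
        (\<forall>k. Suc k < length xs \<longrightarrow> weighted_diff (xs ! Suc k) (xs ! k) = 0) \<and>
        fst (hd xs) = snd (hd xs))}"

end

theory Submission
  imports Defs
begin

text \<open>Both kinds of partitions of m are encoded by a strictly increasing sequence of positive
  integers x_1 < ... < x_n such that x_1 + ... + x_n + x_1 + ... + x_(n-1) = m. The ordinary
  partition takes x_n once and every other x_k twice. The partition with n copies of n consists
  of the parts (x_(k-1) + x_k)_(x_k - x_(k-1)), where x_0 = 0: its smallest part is (x_1)_(x_1),
  consecutive weighted differences vanish, and conversely the x_k are recovered from such a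
  partition as partial sums of its copy numbers.\<close>

definition M1_partitions :: "nat \<Rightarrow> nat multiset set" where
  "M1_partitions m = {P. (\<forall>x \<in># P. 0 < x) \<and> sum_mset P = m \<and> P \<noteq> {#} \<and>
     count P (Max_mset P) = 1 \<and> (\<forall>x \<in># P. x \<noteq> Max_mset P \<longrightarrow> count P x = 2)}"

definition zero_weighted_steps :: "(nat \<times> nat) list \<Rightarrow> bool" where
  "zero_weighted_steps = successively (\<lambda>p q. weighted_diff q p = 0)"

definition M2_partitions :: "nat \<Rightarrow> (nat \<times> nat) multiset set" where
  "M2_partitions m = {P. ncopies_partition m P \<and> P \<noteq> {#} \<and>
     zero_weighted_steps (sorted_list_of_multiset P) \<and>
     fst (hd (sorted_list_of_multiset P)) = snd (hd (sorted_list_of_multiset P))}"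

definition increasing_chains :: "nat \<Rightarrow> nat list set" where
  "increasing_chains m =
     {xs. sorted_wrt (<) (0 # xs) \<and> xs \<noteq> [] \<and> sum_list xs + sum_list (butlast xs) = m}"

lemma successively_iff_nth:
  "successively P xs \<longleftrightarrow> (\<forall>k. Suc k < length xs \<longrightarrow> P (xs ! k) (xs ! Suc k))"
  by (induction P xs rule: successively.induct) (auto simp: nth_Cons split: nat.split)

lemma M1_eq_card: "M1 m = card (M1_partitions m)"
  by (simp add: M1_def M1_partitions_def)

lemma M2_eq_card: "M2 m = card (M2_partitions m)"
  by (simp add: M2_def M2_partitions_def zero_weighted_steps_def successively_iff_nth Let_def)

definition double_but_last :: "'a list \<Rightarrow> 'a multiset" where
  "double_but_last xs = mset xs + mset (butlast xs)"

lemma set_mset_double_but_last [simp]: "set_mset (double_but_last xs) = set xs"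
  by (auto simp: double_but_last_def dest: in_set_butlastD)

lemma count_double_but_last:
  assumes "distinct xs"
  shows "count (double_but_last xs) x = (if x \<in> set xs then if x = last xs then 1 else 2 else 0)"
proof (cases xs rule: rev_cases)
  case (snoc ys y)
  then show ?thesis
    using assms by (auto simp: double_but_last_def distinct_count_atmost_1[THEN iffD1])
qed (simp add: double_but_last_def)

lemma Max_set_sorted:
  assumes "sorted xs" "xs \<noteq> []"
  shows "Max (set xs) = last xs"
proof (rule Max_eqI)
  fix y assume "y \<in> set xs"
  then obtain k where "k < length xs" "y = xs ! k" by (auto simp: in_set_conv_nth)
  then show "y \<le> last xs" using assms by (simp add: last_conv_nth sorted_nth_mono)
qed (use assms in simp_all)

lemma M1_double_but_last:
  assumes "xs \<in> increasing_chains m"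
  shows "double_but_last xs \<in> M1_partitions m"
proof -
  have chain: "sorted_wrt (<) (0 # xs)" "xs \<noteq> []" "sum_list xs + sum_list (butlast xs) = m"
    using assms by (simp_all add: increasing_chains_def)
  then have "sorted xs" "distinct xs"
    by (simp_all add: strict_sorted_iff)
  then have "Max_mset (double_but_last xs) = last xs"
    using chain(2) by (simp add: Max_set_sorted)
  moreover have "sum_mset (double_but_last xs) = m" "double_but_last xs \<noteq> {#}"
    using chain by (simp_all add: double_but_last_def sum_mset_sum_list)
  ultimately show ?thesis
    using chain(1,2) \<open>distinct xs\<close> by (auto simp: M1_partitions_def count_double_but_last)
qed

lemma M1_partition_eq_double_but_last:
  assumes "P \<in> M1_partitions m"
  shows "double_but_last (sorted_list_of_set (set_mset P)) = P"
proof -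
  define xs where "xs = sorted_list_of_set (set_mset P)"
  have xs: "sorted xs" "distinct xs" "set xs = set_mset P"
    by (simp_all add: xs_def)
  moreover have "xs \<noteq> []"
    using assms xs(3) by (auto simp: M1_partitions_def)
  ultimately have "last xs = Max_mset P"
    using Max_set_sorted by metis
  have "double_but_last xs = P"
  proof (rule multiset_eqI)
    fix x
    show "count (double_but_last xs) x = count P x"
      using assms xs(2,3) \<open>last xs = Max_mset P\<close>
      by (cases "x \<in># P") (auto simp: M1_partitions_def count_double_but_last not_in_iff)
  qed
  then show ?thesis
    by (simp add: xs_def)
qed

lemma bij_betw_double_but_last:
  "bij_betw double_but_last (increasing_chains m) (M1_partitions m)"
proof (rule bij_betw_byWitness[where f' = "\<lambda>P. sorted_list_of_set (set_mset P)"])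
  show "\<forall>xs \<in> increasing_chains m. sorted_list_of_set (set_mset (double_but_last xs)) = xs"
    by (auto simp: increasing_chains_def strict_sorted_iff sorted_list_of_set.idem_if_sorted_distinct)
  show "\<forall>P \<in> M1_partitions m. double_but_last (sorted_list_of_set (set_mset P)) = P"
    using M1_partition_eq_double_but_last by blast
  show "double_but_last ` increasing_chains m \<subseteq> M1_partitions m"
    using M1_double_but_last by blast
  show "(\<lambda>P. sorted_list_of_set (set_mset P)) ` M1_partitions m \<subseteq> increasing_chains m"
  proof clarify
    fix P assume P: "P \<in> M1_partitions m"
    define xs where "xs = sorted_list_of_set (set_mset P)"
    have "sum_mset (double_but_last xs) = m"
      using P M1_partition_eq_double_but_last by (simp add: M1_partitions_def xs_def)
    then have "sum_list xs + sum_list (butlast xs) = m"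
      by (simp add: double_but_last_def sum_mset_sum_list)
    then show "sorted_list_of_set (set_mset P) \<in> increasing_chains m"
      using P by (auto simp: increasing_chains_def M1_partitions_def xs_def
          sorted_list_of_set_eq_Nil_iff strict_sorted_list_of_set)
  qed
qed

fun ncopies_parts :: "nat \<Rightarrow> nat list \<Rightarrow> (nat \<times> nat) list" where
  "ncopies_parts c [] = []"
| "ncopies_parts c (x # xs) = (c + x, x - c) # ncopies_parts x xs"

fun chain_of_parts :: "nat \<Rightarrow> (nat \<times> nat) list \<Rightarrow> nat list" where
  "chain_of_parts c [] = []"
| "chain_of_parts c (p # ps) = (c + snd p) # chain_of_parts (c + snd p) ps"

lemma sum_ncopies_parts:
  "sum_list (map fst (ncopies_parts c xs)) = sum_list xs + sum_list (butlast (c # xs))"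
  by (induction c xs rule: ncopies_parts.induct) auto

lemma chain_of_ncopies_parts:
  "sorted_wrt (<) (c # xs) \<Longrightarrow> chain_of_parts c (ncopies_parts c xs) = xs"
  by (induction c xs rule: ncopies_parts.induct) auto

lemma ncopies_parts_bounds:
  "sorted_wrt (<) (c # xs) \<Longrightarrow> p \<in> set (ncopies_parts c xs) \<Longrightarrow> 1 \<le> snd p \<and> snd p \<le> fst p"
  by (induction c xs rule: ncopies_parts.induct) auto

lemma sorted_ncopies_parts:
  "sorted_wrt (<) (c # xs) \<Longrightarrow> sorted_wrt (<) (ncopies_parts c xs)"
proof (induction c xs rule: ncopies_parts.induct)
  case (2 c x xs)
  then show ?case
    by (cases xs) (auto simp: less_prod_def)
qed simp

lemma zero_weighted_steps_ncopies_parts: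
  "sorted_wrt (<) (c # xs) \<Longrightarrow> zero_weighted_steps (ncopies_parts c xs)"
proof (induction c xs rule: ncopies_parts.induct)
  case (2 c x xs)
  then show ?case
    by (cases xs) (auto simp: zero_weighted_steps_def weighted_diff_def)
qed (simp add: zero_weighted_steps_def)

lemma sorted_chain_of_parts:
  "\<forall>p \<in> set ps. 0 < snd p \<Longrightarrow> sorted_wrt (<) (c # chain_of_parts c ps)"
  by (induction ps arbitrary: c) fastforce+

lemma ncopies_parts_of_chain:
  "zero_weighted_steps (p # ps) \<Longrightarrow> fst p = 2 * c + snd p \<Longrightarrow>
   ncopies_parts c (chain_of_parts c (p # ps)) = p # ps"
  by (induction ps arbitrary: c p) (auto simp: zero_weighted_steps_def weighted_diff_def)

lemma sum_mset_fst_ncopies_parts: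
  assumes "xs \<noteq> []"
  shows "sum_mset (image_mset fst (mset (ncopies_parts 0 xs))) = sum_list xs + sum_list (butlast xs)"
proof -
  have "butlast (0 # xs) = 0 # butlast xs"
    using assms by simp
  then show ?thesis
    using sum_ncopies_parts[of 0 xs] by (simp add: sum_mset_sum_list flip: mset_map)
qed

lemma sort_ncopies_parts:
  "sorted_wrt (<) (c # xs) \<Longrightarrow> sort (ncopies_parts c xs) = ncopies_parts c xs"
  using sorted_ncopies_parts by (simp add: strict_sorted_iff sorted_sort_id)

lemma M2_ncopies_parts:
  assumes "xs \<in> increasing_chains m"
  shows "mset (ncopies_parts 0 xs) \<in> M2_partitions m"
proof -
  have chain: "sorted_wrt (<) (0 # xs)" "xs \<noteq> []" "sum_list xs + sum_list (butlast xs) = m"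
    using assms by (simp_all add: increasing_chains_def)
  have "ncopies_partition m (mset (ncopies_parts 0 xs))"
    using chain ncopies_parts_bounds sum_mset_fst_ncopies_parts
    by (auto simp: ncopies_partition_def)
  moreover have "ncopies_parts 0 xs \<noteq> []"
    and "fst (hd (ncopies_parts 0 xs)) = snd (hd (ncopies_parts 0 xs))"
    using chain(2) by (cases xs; simp)+
  ultimately show ?thesis
    using zero_weighted_steps_ncopies_parts[OF chain(1)]
    by (simp add: M2_partitions_def sort_ncopies_parts[OF chain(1)])
qed

lemma ncopies_parts_chain_of_M2_partition:
  assumes "P \<in> M2_partitions m"
  shows "mset (ncopies_parts 0 (chain_of_parts 0 (sorted_list_of_multiset P))) = P"
proof -
  obtain p ps where ys: "sorted_list_of_multiset P = p # ps"
    using assms set_sorted_list_of_multiset[of P]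
    by (cases "sorted_list_of_multiset P") (auto simp: M2_partitions_def)
  have "ncopies_parts 0 (chain_of_parts 0 (p # ps)) = p # ps"
    using assms ys by (intro ncopies_parts_of_chain) (auto simp: M2_partitions_def)
  then show ?thesis
    using ys mset_sorted_list_of_multiset[of P] by simp
qed

lemma bij_betw_ncopies_parts:
  "bij_betw (\<lambda>xs. mset (ncopies_parts 0 xs)) (increasing_chains m) (M2_partitions m)"
proof (rule bij_betw_byWitness[where f' = "\<lambda>P. chain_of_parts 0 (sorted_list_of_multiset P)"])
  show "\<forall>xs \<in> increasing_chains m.
    chain_of_parts 0 (sorted_list_of_multiset (mset (ncopies_parts 0 xs))) = xs"
    by (simp add: increasing_chains_def chain_of_ncopies_parts sort_ncopies_parts)
  show "\<forall>P \<in> M2_partitions m. mset (ncopies_parts 0 (chain_of_parts 0 (sorted_list_of_multiset P))) = P"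
    using ncopies_parts_chain_of_M2_partition by blast
  show "(\<lambda>xs. mset (ncopies_parts 0 xs)) ` increasing_chains m \<subseteq> M2_partitions m"
    using M2_ncopies_parts by blast
  show "(\<lambda>P. chain_of_parts 0 (sorted_list_of_multiset P)) ` M2_partitions m \<subseteq> increasing_chains m"
  proof clarify
    fix P assume P: "P \<in> M2_partitions m"
    define xs where "xs = chain_of_parts 0 (sorted_list_of_multiset P)"
    have "sorted_wrt (<) (0 # xs)"
      unfolding xs_def
      using P by (intro sorted_chain_of_parts) (auto simp: M2_partitions_def ncopies_partition_def)
    moreover have "xs \<noteq> []"
      using P set_sorted_list_of_multiset[of P]
      by (cases "sorted_list_of_multiset P") (auto simp: xs_def M2_partitions_def)
    moreover have "sum_list xs + sum_list (butlast xs) = m"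
      using P ncopies_parts_chain_of_M2_partition[OF P] sum_mset_fst_ncopies_parts[OF \<open>xs \<noteq> []\<close>]
      by (simp add: xs_def M2_partitions_def ncopies_partition_def)
    ultimately show "chain_of_parts 0 (sorted_list_of_multiset P) \<in> increasing_chains m"
      by (simp add: increasing_chains_def xs_def)
  qed
qed

theorem corollary28:
  fixes m :: nat
  assumes "0 < m"
  shows "M1 m = M2 m"
proof -
  have "M1 m = card (increasing_chains m)"
    using bij_betw_same_card[OF bij_betw_double_but_last] by (simp add: M1_eq_card)
  also have "\<dots> = M2 m"
    using bij_betw_same_card[OF bij_betw_ncopies_parts] by (simp add: M2_eq_card)
  finally show ?thesis .
qed

end
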